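(* Let $p$ be a prime, $n\ge1$, and let $s_1,\ldots,s_{n+1}$ be integers with $0\le s_\nu<p$ for all $\nu=1,\ldots,n+1$. If \[ \sum_{\nu=1}^n s_\nu\,\varphi(p^{\nu-1})=s_{n+1}\,p^{n-1}, \] then $s_1=s_2=\cdots=s_{n+1}$.
   Context: $\varphi$ denotes Euler's totient function (so $\varphi(p^0)=1$). *)

theory Defs
  imports "HOL-Number_Theory.Number_Theory"
begin

end

theory Submission
  imports Defs
begin

text \<open>The weights \<open>\<phi>(p^(\<nu>-1))\<close>, \<open>\<nu> = 1..k+1\<close>, add up to \<open>p^k\<close>, so a weighted sum \<open>A\<close>
  of digits in \<open>[0, p)\<close> lies in \<open>[0, (p-1) p^k]\<close>. If the sum up to \<open>k+2\<close> equals \<open>c p^(k+1)\<close>,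
  splitting off the last term \<open>t p^k (p-1)\<close> gives \<open>A = (p (c-t) + t) p^k\<close>; the bounds on \<open>A\<close>
  force \<open>0 \<le> p (c-t) + t < p\<close>, hence \<open>c = t\<close> and \<open>A = c p^k\<close>, and induction on \<open>k\<close>
  finishes the argument.\<close>

lemma int_totient_prime_power_Suc:
  assumes "prime p"
  shows "int (totient (p ^ Suc k)) = int p ^ k * (int p - 1)"
  using totient_prime_power_Suc[OF assms, of k] prime_ge_1_nat[OF assms] by simp

lemma sum_totient_prime_powers:
  assumes "prime p"
  shows "(\<Sum>\<nu>=1..Suc k. int (totient (p ^ (\<nu> - 1)))) = int p ^ k"
proof (induction k)
  case 0
  then show ?case by simp
next
  case (Suc k)
  then show ?case
    using int_totient_prime_power_Suc[OF assms, of k] by (simp add: algebra_simps)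
qed

lemma totient_weighted_digit_sum_bounds:
  fixes s :: "nat \<Rightarrow> int"
  assumes "prime p" and digits: "\<forall>\<nu>\<in>{1..Suc k}. 0 \<le> s \<nu> \<and> s \<nu> < int p"
  defines "A \<equiv> \<Sum>\<nu>=1..Suc k. s \<nu> * int (totient (p ^ (\<nu> - 1)))"
  shows "0 \<le> A" and "A \<le> (int p - 1) * int p ^ k"
proof -
  show "0 \<le> A"
    unfolding A_def using digits by (intro sum_nonneg) auto
  have "A \<le> (\<Sum>\<nu>=1..Suc k. (int p - 1) * int (totient (p ^ (\<nu> - 1))))"
    unfolding A_def using digits by (intro sum_mono mult_right_mono) auto
  also have "\<dots> = (int p - 1) * int p ^ k"
    by (simp only: sum_distrib_left[symmetric] sum_totient_prime_powers[OF assms(1)])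
  finally show "A \<le> (int p - 1) * int p ^ k" .
qed

lemma digit_shift_eq_zero:
  fixes m q t :: int
  assumes "0 \<le> t" "t < m" "0 \<le> m * q + t" "m * q + t < m"
  shows "q = 0"
proof -
  have "(m * q + t) div m = q"
    using assms(1,2) by simp
  moreover have "(m * q + t) div m = 0"
    using assms(3,4) by (rule div_pos_pos_trivial)
  ultimately show ?thesis by simp
qed

lemma totient_weighted_digit_sum_eq_imp_const:
  fixes p :: nat and s :: "nat \<Rightarrow> int"
  assumes p: "prime p"
    and "\<forall>\<nu>\<in>{1..Suc k}. 0 \<le> s \<nu> \<and> s \<nu> < int p" and "0 \<le> c" and "c < int p"
    and "(\<Sum>\<nu>=1..Suc k. s \<nu> * int (totient (p ^ (\<nu> - 1)))) = c * int p ^ k"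
  shows "\<forall>\<nu>\<in>{1..Suc k}. s \<nu> = c"
  using assms(2-)
proof (induction k arbitrary: c)
  case 0
  then show ?case by simp
next
  case (Suc k)
  define A where "A = (\<Sum>\<nu>=1..Suc k. s \<nu> * int (totient (p ^ (\<nu> - 1))))"
  define t where "t = s (Suc (Suc k))"
  have digits: "\<forall>\<nu>\<in>{1..Suc k}. 0 \<le> s \<nu> \<and> s \<nu> < int p"
    using Suc.prems(1) by auto
  have t: "0 \<le> t" "t < int p"
    using Suc.prems(1) unfolding t_def by auto
  have "A + t * (int p ^ k * (int p - 1)) = c * int p ^ Suc k"
    using Suc.prems(4) int_totient_prime_power_Suc[OF p, of k] unfolding A_def t_def by simp
  then have A: "A = (int p * (c - t) + t) * int p ^ k"
    by (simp add: algebra_simps)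
  have pk: "int p ^ k > 0"
    using prime_gt_0_nat[OF p] by simp
  have "0 \<le> int p * (c - t) + t"
    using totient_weighted_digit_sum_bounds(1)[OF p digits] pk
    unfolding A_def[symmetric] A by (simp add: zero_le_mult_iff)
  moreover have "int p * (c - t) + t \<le> int p - 1"
    using totient_weighted_digit_sum_bounds(2)[OF p digits] pk
    unfolding A_def[symmetric] A by (rule mult_right_le_imp_le)
  ultimately have "c - t = 0"
    by (intro digit_shift_eq_zero[OF t]) simp_all
  then have "c = t"
    by simp
  with A have "A = c * int p ^ k"
    by simp
  then have "\<forall>\<nu>\<in>{1..Suc k}. s \<nu> = c"
    unfolding A_def by (rule Suc.IH[OF digits Suc.prems(2,3)])
  moreover have "s (Suc (Suc k)) = c"
    using \<open>c = t\<close> unfolding t_def by simp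
  ultimately show ?case
    by (simp add: atLeastAtMostSuc_conv)
qed

theorem lemma3p4:
  fixes p n :: nat and s :: "nat \<Rightarrow> int"
  assumes "prime p" and "n \<ge> 1"
    and "\<And>\<nu>. \<nu> \<in> {1..n+1} \<Longrightarrow> 0 \<le> s \<nu> \<and> s \<nu> < int p"
    and "(\<Sum>\<nu>=1..n. s \<nu> * int (totient (p ^ (\<nu> - 1)))) = s (n+1) * int p ^ (n - 1)"
  shows "\<forall>\<nu>\<in>{1..n+1}. s \<nu> = s 1"
proof -
  obtain k where n: "n = Suc k"
    using assms(2) by (cases n) auto
  have digits: "\<forall>\<nu>\<in>{1..Suc k}. 0 \<le> s \<nu> \<and> s \<nu> < int p"
    using assms(3) unfolding n by simp
  have last_digit: "0 \<le> s (n+1)" "s (n+1) < int p"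
    using assms(3) by simp_all
  have "(\<Sum>\<nu>=1..Suc k. s \<nu> * int (totient (p ^ (\<nu> - 1)))) = s (n+1) * int p ^ k"
    using assms(4) by (simp only: n diff_Suc_1)
  then have "\<forall>\<nu>\<in>{1..Suc k}. s \<nu> = s (n+1)"
    by (rule totient_weighted_digit_sum_eq_imp_const[OF assms(1) digits last_digit])
  then have "\<forall>\<nu>\<in>{1..n+1}. s \<nu> = s (n+1)"
    unfolding n by (simp add: atLeastAtMostSuc_conv)
  moreover have "1 \<in> {1..n+1}"
    by simp
  ultimately show ?thesis
    by metis
qed

end
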